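(* Let $2\le n<m$, $Q=\sum_{i\in[m]}q_i\mathrm B(\sigma_i)\in\mathbb B_m^*$ with all $q_i>0$ and $0\le\sigma_1<\cdots<\sigma_m\le1/2$, and let $W=D_Q(i_2,\dots,i_n;s_2,\dots,s_n)=\sum_{j\in[n]}p_j\mathrm B(\varepsilon_j)$ and $W'=D_Q(i'_2,\dots,i'_n;s'_2,\dots,s'_n)=\sum_{j\in[n]}p'_j\mathrm B(\varepsilon'_j)$ be $2n$-P$^*$-degradations of $Q$ (with $p_j,\varepsilon_j$ and $p'_j,\varepsilon'_j$ as in the construction of $D_Q$). Suppose $(i_k,s_k)=(i'_j,s'_j)$ for some $k,j\in\{2,\dots,n\}$. Then $p_k\ge p'_j$ if $\varepsilon_k\ge\varepsilon'_j$, and $p_{k-1}\ge p'_{j-1}$ if $\varepsilon_{k-1}\le\varepsilon'_{j-1}$.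
   Context: A BIDMC $W$ has input uniform on $\{0,1\}$, discrete output alphabet $\mathcal Y$ and transition probabilities $\Pr(y\mid x)$; its LR-profile is $P_W(\varepsilon)=\Pr\big(\mathcal L_W(y)=\varepsilon/(1-\varepsilon)\big)$ with $\mathcal L_W(\hat y)=\Pr(y=\hat y\mid x=0)/\Pr(y=\hat y\mid x=1)$, and $W\cong W'$ if LR-profiles coincide; channel identities are up to $\cong$. $W'\preccurlyeq W$ if there is a channel $T$ from the output alphabet of $W$ to that of $W'$ with $\Pr(y'\mid x'=a)=\sum_{y}\Pr(y\mid x=a)T(y'\mid y)$. $\mathrm B(\varepsilon)$ is the BSC with crossover probability $\varepsilon$; $\sum_iq_iW_i$ denotes the random switching channel (use $W_i$ with probability $q_i$ independently of the input and output the index $i$ along with the output). $\mathbb B_n$ is the set of BIDMCs equivalent to $\sum_{i\in[n]}p_i\mathrm B(\varepsilon_i)$ for a probability vector $(p_i)$ and $\varepsilon_i\in[0,1]$; $\mathbb B_n^*=\mathbb B_n\setminus\mathbb B_{n-1}$. $P_\epsilon(W)=\frac12\sum_{y}\min\{\Pr(y\mid x=0),\Pr(y\mid x=1)\}$. For a symmetric BIDMC $Q$ and $n\ge1$, $W$ is a $2n$-P-degradation of $Q$ if $W\in\mathbb B_n$, $W\preccurlyeq Q$ and $P_\epsilon(W)=\min\{P_\epsilon(W'):W'\in\mathbb B_n,\ W'\preccurlyeq Q\}$. Construction of $D_Q$: for $Q$ as in the claim, put $q_0=q_{m+1}=0$. Given integers $1\le i_2<\cdots<i_n\le m$ and reals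 $s_j\in[0,q_{i_j}]$, set $i_1=0$, $s_1=0$, $i_{n+1}=m+1$, $s_{n+1}=0$, and for $j\in[n]$ $$p_j=s_j+(q_{i_{j+1}}-s_{j+1})+\sum_{i_j<i<i_{j+1}}q_i,\qquad p_j\varepsilon_j=s_j\sigma_{i_j}+(q_{i_{j+1}}-s_{j+1})\sigma_{i_{j+1}}+\sum_{i_j<i<i_{j+1}}q_i\sigma_i$$ (terms with weight $0$ contribute $0$). Then $D_Q(i_2,\dots,i_n;s_2,\dots,s_n)=\sum_{j\in[n]:p_j>0}p_j\mathrm B(\varepsilon_j)$; the pairs $(i_j,s_j)$ are its splitting patterns. Such a channel is a $2n$-P$^*$-degradation of $Q$ if (i) all $p_j>0$ and $0\le\varepsilon_1<\cdots<\varepsilon_n\le1/2$; (ii) it is a $2n$-P-degradation of $Q$; (iii) for every $j\in[n]$ with $i_{j+1}=i_j+1$: if $s_j=0$ then $s_{j+1}=0$, and if $s_{j+1}=q_{i_{j+1}}$ then $s_j=q_{i_j}$. *)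

theory Defs
  imports Complex_Main "HOL-Library.Extended_Real"
begin

(* A BIDMC: input x :: bool (False = 0, True = 1), output alphabet encoded in nat,
   W x y = Pr(y | x).  Outputs with both probabilities 0 are "not in the alphabet". *)
type_synonym chan = "bool \<Rightarrow> nat \<Rightarrow> real"

definition chan_supp :: "chan \<Rightarrow> nat set" where
  "chan_supp W = {y. W False y \<noteq> 0 \<or> W True y \<noteq> 0}"

definition is_bidmc :: "chan \<Rightarrow> bool" where
  "is_bidmc W \<longleftrightarrow> (\<forall>x y. 0 \<le> W x y) \<and> finite (chan_supp W) \<and>
     (\<forall>x. (\<Sum>y\<in>chan_supp W. W x y) = 1)"

definition lr :: "chan \<Rightarrow> nat \<Rightarrow> ereal" where
  "lr W y = (if W True y = 0 then PInfty else ereal (W False y / W True y))"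

definition odds :: "real \<Rightarrow> ereal" where
  "odds e = (if e = 1 then PInfty else ereal (e / (1 - e)))"

(* LR-profile: P_W(eps) = Pr(L_W(y) = eps/(1-eps)), input uniform *)
definition lr_profile :: "chan \<Rightarrow> real \<Rightarrow> real" where
  "lr_profile W e = (\<Sum>y\<in>{y\<in>chan_supp W. lr W y = odds e}. (W False y + W True y) / 2)"

definition chan_equiv :: "chan \<Rightarrow> chan \<Rightarrow> bool" where
  "chan_equiv W W' \<longleftrightarrow> (\<forall>e. lr_profile W e = lr_profile W' e)"

definition degraded :: "chan \<Rightarrow> chan \<Rightarrow> bool" where
  "degraded W' W \<longleftrightarrow> (\<exists>T :: nat \<Rightarrow> nat \<Rightarrow> real.
      (\<forall>y. (\<forall>y'. 0 \<le> T y y') \<and> finite {y'. T y y' \<noteq> 0} \<and>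
           (\<Sum>y'\<in>{y'. T y y' \<noteq> 0}. T y y') = 1) \<and>
      (\<forall>a y'. W' a y' = (\<Sum>y\<in>chan_supp W. W a y * T y y')))"

definition bsc :: "real \<Rightarrow> bool \<Rightarrow> bool \<Rightarrow> real" where
  "bsc e x b = (if b = x then 1 - e else e)"

(* random switching channel  \<Sum>_{i\<in>[n]} p_i B(e_i): output (i,b) encoded as 2*i + b *)
definition bsc_mix :: "nat \<Rightarrow> (nat \<Rightarrow> real) \<Rightarrow> (nat \<Rightarrow> real) \<Rightarrow> chan" where
  "bsc_mix n p e x y =
     (if 1 \<le> y div 2 \<and> y div 2 \<le> n then p (y div 2) * bsc (e (y div 2)) x (odd y) else 0)"

definition in_B :: "nat \<Rightarrow> chan \<Rightarrow> bool" where
  "in_B n W \<longleftrightarrow> (\<exists>p e. (\<forall>i\<in>{1..n}. 0 \<le> p i \<and> 0 \<le> e i \<and> e i \<le> 1) \<and>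
      (\<Sum>i=1..n. p i) = 1 \<and> chan_equiv W (bsc_mix n p e))"

definition in_B_star :: "nat \<Rightarrow> chan \<Rightarrow> bool" where
  "in_B_star n W \<longleftrightarrow> in_B n W \<and> \<not> in_B (n - 1) W"

definition P_err :: "chan \<Rightarrow> real" where
  "P_err W = (1/2) * (\<Sum>y\<in>chan_supp W. min (W False y) (W True y))"

definition is_P_degradation :: "nat \<Rightarrow> chan \<Rightarrow> chan \<Rightarrow> bool" where
  "is_P_degradation n Q W \<longleftrightarrow> is_bidmc W \<and> in_B n W \<and> degraded W Q \<and>
     (\<forall>W'. is_bidmc W' \<and> in_B n W' \<and> degraded W' Q \<longrightarrow> P_err W \<le> P_err W')"

definition qx :: "nat \<Rightarrow> (nat \<Rightarrow> real) \<Rightarrow> nat \<Rightarrow> real" where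
  "qx m q i = (if 1 \<le> i \<and> i \<le> m then q i else 0)"

definition ix :: "nat \<Rightarrow> nat \<Rightarrow> (nat \<Rightarrow> nat) \<Rightarrow> nat \<Rightarrow> nat" where
  "ix m n ii j = (if j = 1 then 0 else if j = n + 1 then m + 1 else ii j)"

definition sx :: "nat \<Rightarrow> (nat \<Rightarrow> real) \<Rightarrow> nat \<Rightarrow> real" where
  "sx n s j = (if j = 1 \<or> j = n + 1 then 0 else s j)"

definition dq_p :: "nat \<Rightarrow> (nat \<Rightarrow> real) \<Rightarrow> nat \<Rightarrow> (nat \<Rightarrow> nat) \<Rightarrow> (nat \<Rightarrow> real) \<Rightarrow> nat \<Rightarrow> real" where
  "dq_p m q n ii s j =
     sx n s j + (qx m q (ix m n ii (j + 1)) - sx n s (j + 1)) +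
     (\<Sum>i\<in>{ix m n ii j<..<ix m n ii (j + 1)}. qx m q i)"

definition dq_pe :: "nat \<Rightarrow> (nat \<Rightarrow> real) \<Rightarrow> (nat \<Rightarrow> real) \<Rightarrow> nat \<Rightarrow> (nat \<Rightarrow> nat) \<Rightarrow> (nat \<Rightarrow> real) \<Rightarrow> nat \<Rightarrow> real" where
  "dq_pe m q \<sigma> n ii s j =
     sx n s j * \<sigma> (ix m n ii j) +
     (qx m q (ix m n ii (j + 1)) - sx n s (j + 1)) * \<sigma> (ix m n ii (j + 1)) +
     (\<Sum>i\<in>{ix m n ii j<..<ix m n ii (j + 1)}. qx m q i * \<sigma> i)"

definition dq_eps :: "nat \<Rightarrow> (nat \<Rightarrow> real) \<Rightarrow> (nat \<Rightarrow> real) \<Rightarrow> nat \<Rightarrow> (nat \<Rightarrow> nat) \<Rightarrow> (nat \<Rightarrow> real) \<Rightarrow> nat \<Rightarrow> real" where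
  "dq_eps m q \<sigma> n ii s j = dq_pe m q \<sigma> n ii s j / dq_p m q n ii s j"

definition DQ :: "nat \<Rightarrow> (nat \<Rightarrow> real) \<Rightarrow> (nat \<Rightarrow> real) \<Rightarrow> nat \<Rightarrow> (nat \<Rightarrow> nat) \<Rightarrow> (nat \<Rightarrow> real) \<Rightarrow> chan" where
  "DQ m q \<sigma> n ii s =
     bsc_mix n (\<lambda>j. if dq_p m q n ii s j > 0 then dq_p m q n ii s j else 0)
               (dq_eps m q \<sigma> n ii s)"

definition dq_params :: "nat \<Rightarrow> (nat \<Rightarrow> real) \<Rightarrow> nat \<Rightarrow> (nat \<Rightarrow> nat) \<Rightarrow> (nat \<Rightarrow> real) \<Rightarrow> bool" where
  "dq_params m q n ii s \<longleftrightarrow>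
     (\<forall>j\<in>{2..n}. 1 \<le> ii j \<and> ii j \<le> m \<and> 0 \<le> s j \<and> s j \<le> qx m q (ii j)) \<and>
     (\<forall>j\<in>{2..n}. \<forall>k\<in>{2..n}. j < k \<longrightarrow> ii j < ii k)"

definition is_Pstar_degradation ::
  "nat \<Rightarrow> (nat \<Rightarrow> real) \<Rightarrow> (nat \<Rightarrow> real) \<Rightarrow> nat \<Rightarrow> (nat \<Rightarrow> nat) \<Rightarrow> (nat \<Rightarrow> real) \<Rightarrow> bool" where
  "is_Pstar_degradation m q \<sigma> n ii s \<longleftrightarrow>
     dq_params m q n ii s \<and>
     (\<forall>j\<in>{1..n}. dq_p m q n ii s j > 0) \<and>
     0 \<le> dq_eps m q \<sigma> n ii s 1 \<and>
     (\<forall>j\<in>{1..n}. \<forall>k\<in>{1..n}. j < k \<longrightarrow> dq_eps m q \<sigma> n ii s j < dq_eps m q \<sigma> n ii s k) \<and>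
     dq_eps m q \<sigma> n ii s n \<le> 1/2 \<and>
     is_P_degradation n (bsc_mix m q \<sigma>) (DQ m q \<sigma> n ii s) \<and>
     (\<forall>j\<in>{1..n}. ix m n ii (j + 1) = ix m n ii j + 1 \<longrightarrow>
        (sx n s j = 0 \<longrightarrow> sx n s (j + 1) = 0) \<and>
        (sx n s (j + 1) = qx m q (ix m n ii (j + 1)) \<longrightarrow> sx n s j = qx m q (ix m n ii j)))"

end

theory Submission
  imports Defs
begin

(* A splitting pattern cuts the atoms of Q (ordered by sigma) into consecutive blocks; p_j is
   the mass and eps_j the sigma-mean of block j. Two blocks starting at the same cut are nested:
   if p_k < p'_j, then block j of W' is block k of W followed by a block of positive mass lying
   further right. Of two adjacent blocks the right one has the strictly larger mean, strictness
   coming from the P*-condition (iii), which forbids both to sit on the single atom at their common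
   cut. The mediant inequality then gives eps_k < eps'_j. Blocks ending at the same cut are
   handled symmetrically. *)

lemma weighted_mean_less:
  fixes w d f :: "'a \<Rightarrow> real"
  assumes "finite S" and "\<forall>x\<in>S. 0 \<le> w x" and "\<forall>x\<in>S. 0 \<le> d x"
    and "0 < sum w S" and "0 < sum d S"
    and w_le: "\<forall>x\<in>S. 0 < w x \<longrightarrow> f x \<le> \<theta>" and d_ge: "\<forall>x\<in>S. 0 < d x \<longrightarrow> \<theta> \<le> f x"
    and strict: "(\<exists>x\<in>S. 0 < w x \<and> f x < \<theta>) \<or> (\<exists>x\<in>S. 0 < d x \<and> \<theta> < f x)"
  shows "(\<Sum>x\<in>S. w x * f x) / sum w S < (\<Sum>x\<in>S. d x * f x) / sum d S"
proof -
  have w_pt: "w x * f x \<le> w x * \<theta>" if "x \<in> S" for x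
    using that assms(2) w_le by (cases "w x = 0") (auto intro: mult_left_mono)
  have d_pt: "d x * \<theta> \<le> d x * f x" if "x \<in> S" for x
    using that assms(3) d_ge by (cases "d x = 0") (auto intro: mult_left_mono)
  have w_sum: "(\<Sum>x\<in>S. w x * f x) \<le> (\<Sum>x\<in>S. w x * \<theta>)"
    using w_pt by (rule sum_mono)
  have d_sum: "(\<Sum>x\<in>S. d x * \<theta>) \<le> (\<Sum>x\<in>S. d x * f x)"
    using d_pt by (rule sum_mono)
  have "(\<Sum>x\<in>S. w x * f x) < (\<Sum>x\<in>S. w x * \<theta>) \<or> (\<Sum>x\<in>S. d x * \<theta>) < (\<Sum>x\<in>S. d x * f x)"
    using strict
  proof
    assume "\<exists>x\<in>S. 0 < w x \<and> f x < \<theta>"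
    then show ?thesis
      using w_pt \<open>finite S\<close> by (auto intro!: sum_strict_mono_ex1 mult_strict_left_mono)
  next
    assume "\<exists>x\<in>S. 0 < d x \<and> \<theta> < f x"
    then show ?thesis
      using d_pt \<open>finite S\<close> by (auto intro!: sum_strict_mono_ex1 mult_strict_left_mono)
  qed
  moreover have "(\<Sum>x\<in>S. w x * \<theta>) = \<theta> * sum w S" "(\<Sum>x\<in>S. d x * \<theta>) = \<theta> * sum d S"
    by (simp_all add: sum_distrib_left mult.commute)
  ultimately have "(\<Sum>x\<in>S. w x * f x) / sum w S < \<theta> \<and> \<theta> \<le> (\<Sum>x\<in>S. d x * f x) / sum d S \<or>
      (\<Sum>x\<in>S. w x * f x) / sum w S \<le> \<theta> \<and> \<theta> < (\<Sum>x\<in>S. d x * f x) / sum d S"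
    using w_sum d_sum assms(4,5)
    by (simp add: pos_divide_less_eq pos_less_divide_eq pos_divide_le_eq pos_le_divide_eq mult.commute)
  then show ?thesis by linarith
qed

lemma mediant_between:
  fixes a b x y :: real
  assumes "0 < x" and "0 < y" and "a / x < b / y"
  shows "a / x < (a + b) / (x + y)" and "(a + b) / (x + y) < b / y"
proof -
  have "a * y < b * x" using assms by (simp add: field_simps)
  then show "a / x < (a + b) / (x + y)" and "(a + b) / (x + y) < b / y"
    using assms(1,2) by (simp_all add: field_simps)
qed

lemma exists_pos_off_point:
  fixes f :: "'a \<Rightarrow> real"
  assumes "finite S" and "0 < sum f S" and "f a \<le> 0"
  shows "\<exists>x\<in>S. x \<noteq> a \<and> 0 < f x"
  using assms by (metis not_less sum_nonpos)

locale sorted_bsc_mixture =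
  fixes m :: nat and q \<sigma> :: "nat \<Rightarrow> real"
  assumes q_pos: "\<forall>i\<in>{1..m}. 0 < q i"
    and \<sigma>_strict_mono: "\<forall>a\<in>{1..m}. \<forall>b\<in>{1..m}. a < b \<longrightarrow> \<sigma> a < \<sigma> b"
begin

lemma qx_nonneg: "0 \<le> qx m q l"
  using q_pos by (auto simp: qx_def intro: less_imp_le)

lemma qx_pos_iff: "0 < qx m q l \<longleftrightarrow> 1 \<le> l \<and> l \<le> m"
  using q_pos by (auto simp: qx_def)

lemma \<sigma>_less: "1 \<le> a \<Longrightarrow> a < b \<Longrightarrow> b \<le> m \<Longrightarrow> \<sigma> a < \<sigma> b"
  using \<sigma>_strict_mono by simp

lemma \<sigma>_mono: "1 \<le> a \<Longrightarrow> a \<le> b \<Longrightarrow> b \<le> m \<Longrightarrow> \<sigma> a \<le> \<sigma> b"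
  using \<sigma>_less[of a b] by (cases "a = b") auto

text \<open>A cut \<open>(i, s)\<close> leaves the atoms \<open>l < i\<close> and the mass \<open>q i - s\<close> of atom \<open>i\<close>
  to its left. This encodes the splitting pattern \<open>(i\<^sub>j, s\<^sub>j)\<close> of \<open>D\<^sub>Q\<close>: block \<open>j\<close> lies
  between the cuts \<open>j\<close> and \<open>j + 1\<close>.\<close>

definition mass_below :: "nat \<Rightarrow> real \<Rightarrow> nat \<Rightarrow> real" where
  "mass_below i s l = (if l < i then qx m q l else if l = i then qx m q l - s else 0)"

definition valid_cut :: "nat \<Rightarrow> real \<Rightarrow> bool" where
  "valid_cut i s \<longleftrightarrow> i \<le> m + 1 \<and> 0 \<le> s \<and> s \<le> qx m q i"

definition cut_le :: "nat \<Rightarrow> real \<Rightarrow> nat \<Rightarrow> real \<Rightarrow> bool" where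
  "cut_le i s i' s' \<longleftrightarrow> i < i' \<or> (i = i' \<and> s' \<le> s)"

definition block :: "nat \<Rightarrow> real \<Rightarrow> nat \<Rightarrow> real \<Rightarrow> nat \<Rightarrow> real" where
  "block i s i' s' l = mass_below i' s' l - mass_below i s l"

definition block_mass :: "nat \<Rightarrow> real \<Rightarrow> nat \<Rightarrow> real \<Rightarrow> real" where
  "block_mass i s i' s' = (\<Sum>l\<in>{0..m+1}. block i s i' s' l)"

definition block_moment :: "nat \<Rightarrow> real \<Rightarrow> nat \<Rightarrow> real \<Rightarrow> real" where
  "block_moment i s i' s' = (\<Sum>l\<in>{0..m+1}. block i s i' s' l * \<sigma> l)"

definition block_mean :: "nat \<Rightarrow> real \<Rightarrow> nat \<Rightarrow> real \<Rightarrow> real" where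
  "block_mean i s i' s' = block_moment i s i' s' / block_mass i s i' s'"

lemma mass_below_bounds:
  "valid_cut i s \<Longrightarrow> 0 \<le> mass_below i s l \<and> mass_below i s l \<le> qx m q l"
  using qx_nonneg[of l] by (auto simp: mass_below_def valid_cut_def)

lemma mass_below_mono:
  "valid_cut i s \<Longrightarrow> valid_cut i' s' \<Longrightarrow> cut_le i s i' s' \<Longrightarrow> mass_below i s l \<le> mass_below i' s' l"
  using qx_nonneg[of l] by (auto simp: mass_below_def valid_cut_def cut_le_def)

lemma block_nonneg:
  "valid_cut i s \<Longrightarrow> valid_cut i' s' \<Longrightarrow> cut_le i s i' s' \<Longrightarrow> 0 \<le> block i s i' s' l"
  using mass_below_mono by (simp add: block_def)

lemma cut_le_if_block_mass_pos:
  assumes "valid_cut i s" and "valid_cut i' s'" and "0 < block_mass i s i' s'"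
  shows "cut_le i s i' s'"
proof (rule ccontr)
  assume "\<not> cut_le i s i' s'"
  then have "cut_le i' s' i s" by (auto simp: cut_le_def)
  then have "block i s i' s' l \<le> 0" for l
    using mass_below_mono[OF assms(2,1)] by (simp add: block_def)
  then have "block_mass i s i' s' \<le> 0" unfolding block_mass_def by (rule sum_nonpos)
  with assms(3) show False by simp
qed

lemma ex_block_pos: "0 < block_mass i s i' s' \<Longrightarrow> \<exists>l. 0 < block i s i' s' l"
  unfolding block_mass_def by (meson not_less sum_nonpos)

lemma block_pos_imp:
  assumes "valid_cut i s" and "valid_cut i' s'" and "0 < block i s i' s' l"
  shows "1 \<le> l \<and> l \<le> m \<and> i \<le> l \<and> l \<le> i'"
proof -
  have "0 < mass_below i' s' l" and "mass_below i s l < qx m q l"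
    using assms mass_below_bounds[of i s l] mass_below_bounds[of i' s' l] by (auto simp: block_def)
  then show ?thesis
    using assms(1) qx_pos_iff[of l] by (auto simp: mass_below_def valid_cut_def split: if_splits)
qed

lemma block_mass_add: "block_mass i s i' s' + block_mass i' s' i'' s'' = block_mass i s i'' s''"
  by (simp add: block_mass_def block_def sum.distrib[symmetric])

lemma block_moment_add: "block_moment i s i' s' + block_moment i' s' i'' s'' = block_moment i s i'' s''"
  by (simp add: block_moment_def block_def sum.distrib[symmetric] algebra_simps)

text \<open>Both means are compared with \<open>\<sigma> i\<close>: the left block lives on atoms \<open>\<le> i\<close>, the
  right one on atoms \<open>\<ge> i\<close>.\<close>

lemma block_mean_less_block_mean:
  assumes c0: "valid_cut i0 s0" and c: "valid_cut i s" and c2: "valid_cut i2 s2"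
    and pos_left: "0 < block_mass i0 s0 i s" and pos_right: "0 < block_mass i s i2 s2"
    and off_atom: "(\<exists>l. l \<noteq> i \<and> 0 < block i0 s0 i s l) \<or> (\<exists>l. l \<noteq> i \<and> 0 < block i s i2 s2 l)"
  shows "block_mean i0 s0 i s < block_mean i s i2 s2"
proof -
  have left_nonneg: "0 \<le> block i0 s0 i s l" and right_nonneg: "0 \<le> block i s i2 s2 l" for l
    using c0 c c2 pos_left pos_right by (auto intro!: block_nonneg cut_le_if_block_mass_pos)
  have left_supp: "1 \<le> l \<and> l \<le> i" if "0 < block i0 s0 i s l" for l
    using block_pos_imp[OF c0 c that] by simp
  have right_supp: "i \<le> l \<and> l \<le> m" if "0 < block i s i2 s2 l" for l
    using block_pos_imp[OF c c2 that] by simp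
  obtain lw where "0 < block i0 s0 i s lw"
    using ex_block_pos[OF pos_left] ..
  moreover obtain ld where "0 < block i s i2 s2 ld"
    using ex_block_pos[OF pos_right] ..
  ultimately have i_range: "1 \<le> i" "i \<le> m"
    using left_supp right_supp by force+
  show ?thesis
    unfolding block_mean_def block_moment_def block_mass_def
  proof (rule weighted_mean_less[where \<theta> = "\<sigma> i"])
    show "\<forall>l\<in>{0..m+1}. 0 < block i0 s0 i s l \<longrightarrow> \<sigma> l \<le> \<sigma> i"
      using left_supp i_range by (auto intro: \<sigma>_mono)
    show "\<forall>l\<in>{0..m+1}. 0 < block i s i2 s2 l \<longrightarrow> \<sigma> i \<le> \<sigma> l"
      using right_supp i_range by (auto intro: \<sigma>_mono)
    show "(\<exists>l\<in>{0..m+1}. 0 < block i0 s0 i s l \<and> \<sigma> l < \<sigma> i) \<or>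
        (\<exists>l\<in>{0..m+1}. 0 < block i s i2 s2 l \<and> \<sigma> i < \<sigma> l)"
      using off_atom
    proof (elim disjE exE conjE)
      fix l assume "l \<noteq> i" and "0 < block i0 s0 i s l"
      with left_supp have "1 \<le> l" "l < i" by force+
      with i_range have "\<sigma> l < \<sigma> i" "l \<in> {0..m+1}" by (auto intro: \<sigma>_less)
      with \<open>0 < block i0 s0 i s l\<close> show ?thesis by blast
    next
      fix l assume "l \<noteq> i" and "0 < block i s i2 s2 l"
      with right_supp have "i < l" "l \<le> m" by force+
      with i_range have "\<sigma> i < \<sigma> l" "l \<in> {0..m+1}" by (auto intro: \<sigma>_less)
      with \<open>0 < block i s i2 s2 l\<close> show ?thesis by blast
    qed
  qed (use pos_left pos_right left_nonneg right_nonneg in \<open>auto simp: block_mass_def\<close>)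
qed

lemma block_off_atom_after_cut:
  assumes "valid_cut i' s'" and "0 < block_mass i 0 i' s'"
  shows "\<exists>l. l \<noteq> i \<and> 0 < block i 0 i' s' l"
proof -
  have "block i 0 i' s' i \<le> 0"
    using mass_below_bounds[OF assms(1), of i] by (simp add: block_def mass_below_def)
  then show ?thesis
    using assms(2) exists_pos_off_point[of "{0..m+1}"] by (force simp: block_mass_def)
qed

lemma block_off_atom_before_cut:
  assumes "valid_cut i s" and "0 < block_mass i s i' (qx m q i')"
  shows "\<exists>l. l \<noteq> i' \<and> 0 < block i s i' (qx m q i') l"
proof -
  have "block i s i' (qx m q i') i' \<le> 0"
    using mass_below_bounds[OF assms(1), of i'] by (simp add: block_def mass_below_def)
  then show ?thesis
    using assms(2) exists_pos_off_point[of "{0..m+1}"] by (force simp: block_mass_def)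
qed

lemma block_pos_next_atom:
  assumes "valid_cut b sb" and "a + 1 < b"
  shows "0 < block a sa b sb (a + 1)"
  using assms qx_pos_iff[of "a + 1"] by (simp add: block_def mass_below_def valid_cut_def)

lemma block_off_right_atom:
  assumes "valid_cut a sa" and "valid_cut b sb" and "a < b" and "0 < sb"
    and atom: "b = a + 1 \<longrightarrow> sa = 0 \<longrightarrow> sb = 0"
  shows "\<exists>l. l \<noteq> b \<and> 0 < block a sa b sb l"
proof (cases "b = a + 1")
  case True
  with atom \<open>0 < sb\<close> assms(1) have "0 < sa" by (auto simp: valid_cut_def)
  moreover have "block a sa b sb a = sa" using \<open>a < b\<close> by (simp add: block_def mass_below_def)
  moreover have "a \<noteq> b" using \<open>a < b\<close> by simp
  ultimately show ?thesis by metis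
next
  case False
  with \<open>a < b\<close> show ?thesis using block_pos_next_atom[OF assms(2)] by force
qed

lemma block_off_left_atom:
  assumes "valid_cut b sb" and "a < b" and "sa < qx m q a"
    and atom: "b = a + 1 \<longrightarrow> sb = qx m q b \<longrightarrow> sa = qx m q a"
  shows "\<exists>l. l \<noteq> a \<and> 0 < block a sa b sb l"
proof (cases "b = a + 1")
  case True
  then have "sb \<noteq> qx m q b" using atom \<open>sa < qx m q a\<close> by auto
  then have "0 < block a sa b sb b"
    using assms(1,2) by (simp add: block_def mass_below_def valid_cut_def)
  moreover have "b \<noteq> a" using \<open>a < b\<close> by simp
  ultimately show ?thesis by blast
next
  case False
  with \<open>a < b\<close> show ?thesis using block_pos_next_atom[OF assms(1)] by force
qed

lemma block_mean_less_of_right_extension: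
  assumes a: "valid_cut a sa" and b: "valid_cut b sb" and b': "valid_cut b' sb'" and "a < b"
    and atom: "b = a + 1 \<longrightarrow> sa = 0 \<longrightarrow> sb = 0"
    and pos: "0 < block_mass a sa b sb" and longer: "block_mass a sa b sb < block_mass a sa b' sb'"
  shows "block_mean a sa b sb < block_mean a sa b' sb'"
proof -
  have ext_pos: "0 < block_mass b sb b' sb'"
    using longer block_mass_add[of a sa b sb b' sb'] by linarith
  have "(\<exists>l. l \<noteq> b \<and> 0 < block a sa b sb l) \<or> (\<exists>l. l \<noteq> b \<and> 0 < block b sb b' sb' l)"
  proof (cases "sb = 0")
    case True
    with ext_pos show ?thesis using block_off_atom_after_cut[OF b'] by simp
  next
    case False
    with b have "0 < sb" by (simp add: valid_cut_def)
    with block_off_right_atom[OF a b \<open>a < b\<close> _ atom] show ?thesis by blast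
  qed
  then have "block_mean a sa b sb < block_mean b sb b' sb'"
    by (rule block_mean_less_block_mean[OF a b b' pos ext_pos])
  then show ?thesis
    using mediant_between(1)[OF pos ext_pos]
    by (simp add: block_mean_def block_mass_add[of a sa b sb b' sb', symmetric]
        block_moment_add[of a sa b sb b' sb', symmetric])
qed

lemma block_mean_less_of_left_extension:
  assumes a': "valid_cut a' sa'" and a: "valid_cut a sa" and b: "valid_cut b sb" and "a < b"
    and atom: "b = a + 1 \<longrightarrow> sb = qx m q b \<longrightarrow> sa = qx m q a"
    and pos: "0 < block_mass a sa b sb" and longer: "block_mass a sa b sb < block_mass a' sa' b sb"
  shows "block_mean a' sa' b sb < block_mean a sa b sb"
proof -
  have ext_pos: "0 < block_mass a' sa' a sa"
    using longer block_mass_add[of a' sa' a sa b sb] by linarith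
  have "(\<exists>l. l \<noteq> a \<and> 0 < block a' sa' a sa l) \<or> (\<exists>l. l \<noteq> a \<and> 0 < block a sa b sb l)"
  proof (cases "sa = qx m q a")
    case True
    with ext_pos show ?thesis using block_off_atom_before_cut[OF a'] by simp
  next
    case False
    with a have "sa < qx m q a" by (simp add: valid_cut_def)
    with block_off_left_atom[OF b \<open>a < b\<close> _ atom] show ?thesis by blast
  qed
  then have "block_mean a' sa' a sa < block_mean a sa b sb"
    by (rule block_mean_less_block_mean[OF a' a b ext_pos pos])
  then show ?thesis
    using mediant_between(2)[OF ext_pos pos]
    by (simp add: block_mean_def block_mass_add[of a' sa' a sa b sb, symmetric]
        block_moment_add[of a' sa' a sa b sb, symmetric])
qed

lemma sum_block_eq:
  assumes "i < i'" and "i' \<le> m + 1"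
  shows "(\<Sum>l\<in>{0..m+1}. block i s i' s' l * f l) =
    s * f i + (qx m q i' - s') * f i' + (\<Sum>l\<in>{i<..<i'}. qx m q l * f l)"
proof -
  have "(\<Sum>l\<in>{0..m+1}. block i s i' s' l * f l) =
      (\<Sum>l\<in>{0..m+1}. (if l = i then s * f l else 0) + (if l = i' then (qx m q l - s') * f l else 0) +
        (if i < l \<and> l < i' then qx m q l * f l else 0))"
    using assms(1) by (intro sum.cong) (auto simp: block_def mass_below_def algebra_simps)
  also have "\<dots> = s * f i + (qx m q i' - s') * f i' +
      (\<Sum>l\<in>{0..m+1}. if i < l \<and> l < i' then qx m q l * f l else 0)"
    using assms by (simp only: sum.distrib sum.delta) simp
  also have "(\<Sum>l\<in>{0..m+1}. if i < l \<and> l < i' then qx m q l * f l else 0) =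
      (\<Sum>l\<in>{i<..<i'}. qx m q l * f l)"
    using assms(2) by (simp add: sum.inter_filter[symmetric]) (intro sum.cong; auto)
  finally show ?thesis .
qed

lemma valid_cut_ix_sx:
  assumes "dq_params m q n ii s" and "j \<in> {1..n+1}"
  shows "valid_cut (ix m n ii j) (sx n s j)"
proof -
  consider "j = 1" | "j = n + 1" | "j \<in> {2..n}" using assms(2) by force
  then show ?thesis
  proof cases
    case 3
    with assms(1) have "ii j \<le> m" "0 \<le> s j" "s j \<le> qx m q (ii j)"
      unfolding dq_params_def by blast+
    with 3 show ?thesis by (simp add: valid_cut_def ix_def sx_def)
  qed (auto simp: valid_cut_def ix_def sx_def qx_def)
qed

lemma ix_less_Suc:
  assumes "dq_params m q n ii s" and "j \<in> {1..n}"
  shows "ix m n ii j < ix m n ii (j + 1)"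
proof -
  consider "j = 1" "n = 1" | "j = 1" "2 \<le> n" | "j = n" "2 \<le> n" | "j \<in> {2..<n}"
    using assms(2) by force
  then show ?thesis
  proof cases
    case 2
    then have "2 \<in> {2..n}" by simp
    with assms(1) have "1 \<le> ii 2" unfolding dq_params_def by blast
    with 2 show ?thesis by (simp add: ix_def numeral_2_eq_2)
  next
    case 3
    then have "n \<in> {2..n}" by simp
    with assms(1) have "ii n \<le> m" unfolding dq_params_def by blast
    with 3 show ?thesis by (simp add: ix_def)
  next
    case 4
    then have "j \<in> {2..n}" "j + 1 \<in> {2..n}" "j < j + 1" by auto
    with assms(1) have "ii j < ii (j + 1)" unfolding dq_params_def by blast
    with 4 show ?thesis by (simp add: ix_def)
  qed (simp add: ix_def)
qed

lemma dq_p_eq_block_mass: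
  assumes "dq_params m q n ii s" and "j \<in> {1..n}"
  shows "dq_p m q n ii s j = block_mass (ix m n ii j) (sx n s j) (ix m n ii (j + 1)) (sx n s (j + 1))"
  using sum_block_eq[OF ix_less_Suc[OF assms], where f = "\<lambda>_. 1"]
    valid_cut_ix_sx[OF assms(1), of "j + 1"] assms(2)
  by (simp add: dq_p_def block_mass_def valid_cut_def)

lemma dq_eps_eq_block_mean:
  assumes "dq_params m q n ii s" and "j \<in> {1..n}"
  shows "dq_eps m q \<sigma> n ii s j = block_mean (ix m n ii j) (sx n s j) (ix m n ii (j + 1)) (sx n s (j + 1))"
  using sum_block_eq[OF ix_less_Suc[OF assms], where f = \<sigma>]
    valid_cut_ix_sx[OF assms(1), of "j + 1"] assms(2)
  by (simp add: dq_eps_def dq_pe_def dq_p_eq_block_mass[OF assms] block_mean_def block_moment_def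
      valid_cut_def)

lemma dq_p_le_of_shared_left_cut:
  assumes W: "is_Pstar_degradation m q \<sigma> n ii s" and W': "dq_params m q n ii' s'"
    and k: "k \<in> {1..n}" and j: "j \<in> {1..n}"
    and shared: "ix m n ii' j = ix m n ii k" "sx n s' j = sx n s k"
    and eps_le: "dq_eps m q \<sigma> n ii' s' j \<le> dq_eps m q \<sigma> n ii s k"
  shows "dq_p m q n ii' s' j \<le> dq_p m q n ii s k"
proof (rule ccontr)
  assume "\<not> ?thesis"
  then have longer: "dq_p m q n ii s k < dq_p m q n ii' s' j" by simp
  have W_params: "dq_params m q n ii s" and W_pos: "0 < dq_p m q n ii s k"
    and atom: "ix m n ii (k + 1) = ix m n ii k + 1 \<longrightarrow> sx n s k = 0 \<longrightarrow> sx n s (k + 1) = 0"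
    using W k unfolding is_Pstar_degradation_def by blast+
  have "dq_eps m q \<sigma> n ii s k < dq_eps m q \<sigma> n ii' s' j"
    unfolding dq_eps_eq_block_mean[OF W_params k] dq_eps_eq_block_mean[OF W' j] shared
  proof (rule block_mean_less_of_right_extension[OF _ _ _ ix_less_Suc[OF W_params k] atom])
    show "0 < block_mass (ix m n ii k) (sx n s k) (ix m n ii (k + 1)) (sx n s (k + 1))"
      using W_pos by (simp add: dq_p_eq_block_mass[OF W_params k])
    show "block_mass (ix m n ii k) (sx n s k) (ix m n ii (k + 1)) (sx n s (k + 1))
        < block_mass (ix m n ii k) (sx n s k) (ix m n ii' (j + 1)) (sx n s' (j + 1))"
      using longer unfolding dq_p_eq_block_mass[OF W_params k] dq_p_eq_block_mass[OF W' j] shared .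
  qed (use W_params W' k j in \<open>auto intro!: valid_cut_ix_sx\<close>)
  with eps_le show False by simp
qed

lemma dq_p_le_of_shared_right_cut:
  assumes W: "is_Pstar_degradation m q \<sigma> n ii s" and W': "dq_params m q n ii' s'"
    and k: "k \<in> {1..n}" and j: "j \<in> {1..n}"
    and shared: "ix m n ii' (j + 1) = ix m n ii (k + 1)" "sx n s' (j + 1) = sx n s (k + 1)"
    and eps_le: "dq_eps m q \<sigma> n ii s k \<le> dq_eps m q \<sigma> n ii' s' j"
  shows "dq_p m q n ii' s' j \<le> dq_p m q n ii s k"
proof (rule ccontr)
  assume "\<not> ?thesis"
  then have longer: "dq_p m q n ii s k < dq_p m q n ii' s' j" by simp
  have W_params: "dq_params m q n ii s" and W_pos: "0 < dq_p m q n ii s k"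
    and atom: "ix m n ii (k + 1) = ix m n ii k + 1 \<longrightarrow>
      sx n s (k + 1) = qx m q (ix m n ii (k + 1)) \<longrightarrow> sx n s k = qx m q (ix m n ii k)"
    using W k unfolding is_Pstar_degradation_def by blast+
  have "dq_eps m q \<sigma> n ii' s' j < dq_eps m q \<sigma> n ii s k"
    unfolding dq_eps_eq_block_mean[OF W_params k] dq_eps_eq_block_mean[OF W' j] shared
  proof (rule block_mean_less_of_left_extension[OF _ _ _ ix_less_Suc[OF W_params k] atom])
    show "0 < block_mass (ix m n ii k) (sx n s k) (ix m n ii (k + 1)) (sx n s (k + 1))"
      using W_pos by (simp add: dq_p_eq_block_mass[OF W_params k])
    show "block_mass (ix m n ii k) (sx n s k) (ix m n ii (k + 1)) (sx n s (k + 1))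
        < block_mass (ix m n ii' j) (sx n s' j) (ix m n ii (k + 1)) (sx n s (k + 1))"
      using longer unfolding dq_p_eq_block_mass[OF W_params k] dq_p_eq_block_mass[OF W' j] shared .
  qed (use W_params W' k j in \<open>auto intro!: valid_cut_ix_sx\<close>)
  with eps_le show False by simp
qed

end

theorem lemma9:
  fixes m n k j :: nat
    and q \<sigma> :: "nat \<Rightarrow> real"
    and ii ii' :: "nat \<Rightarrow> nat"
    and s s' :: "nat \<Rightarrow> real"
  assumes "2 \<le> n" and "n < m"
    and "\<forall>i\<in>{1..m}. 0 < q i"
    and "(\<Sum>i=1..m. q i) = 1"
    and "0 \<le> \<sigma> 1" and "\<sigma> m \<le> 1/2"
    and "\<forall>a\<in>{1..m}. \<forall>b\<in>{1..m}. a < b \<longrightarrow> \<sigma> a < \<sigma> b"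
    and "in_B_star m (bsc_mix m q \<sigma>)"
    and "is_Pstar_degradation m q \<sigma> n ii s"
    and "is_Pstar_degradation m q \<sigma> n ii' s'"
    and "k \<in> {2..n}" and "j \<in> {2..n}"
    and "ii k = ii' j" and "s k = s' j"
  shows "(dq_eps m q \<sigma> n ii s k \<ge> dq_eps m q \<sigma> n ii' s' j
            \<longrightarrow> dq_p m q n ii s k \<ge> dq_p m q n ii' s' j) \<and>
         (dq_eps m q \<sigma> n ii s (k - 1) \<le> dq_eps m q \<sigma> n ii' s' (j - 1)
            \<longrightarrow> dq_p m q n ii s (k - 1) \<ge> dq_p m q n ii' s' (j - 1))"
proof -
  interpret sorted_bsc_mixture m q \<sigma>
    using assms(3,7) by unfold_locales
  have W': "dq_params m q n ii' s'"
    using assms(10) by (simp add: is_Pstar_degradation_def)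
  have "ix m n ii' j = ix m n ii k" "sx n s' j = sx n s k"
    using assms(11-14) by (auto simp: ix_def sx_def)
  moreover have "k - 1 + 1 = k" "j - 1 + 1 = j" "k \<in> {1..n}" "j \<in> {1..n}" "k - 1 \<in> {1..n}" "j - 1 \<in> {1..n}"
    using assms(11,12) by auto
  ultimately show ?thesis
    using dq_p_le_of_shared_left_cut[OF assms(9) W', of k j]
      dq_p_le_of_shared_right_cut[OF assms(9) W', of "k - 1" "j - 1"]
    by simp
qed

end
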